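(* Let $\mathcal{S}$ be a sound and refutationally complete saturation system. Then for all natural numbers $0<n<m$, the system $\mathcal{S}+\mathrm{Literal}\text{-}\mathrm{AIND}^R_2$ refutes neither the clause set $\mathcal{X}_m$ nor the clause set $\mathcal{Y}_{m,n}$.
   Context: Language of linear arithmetic $\{0/0,s/1,p/1,+/2\}$. $\mathcal{T}'$ has axioms (universally closed) $0\neq s(x)$, $p(0)=0$, $p(s(x))=x$, $x+0=x$, $x+s(y)=s(x+y)$, $x\neq0\to x=s(p(x))$, $x+y=y+x$, $(x+y)+z=x+(y+z)$, $x+y=x+z\to y=z$. $m\cdot t$ is $t+(t+\cdots+(t+t)\cdots)$ ($m$ copies), $s^n$ is $n$-fold $s$. $C_m=\forall x,y(m\cdot x=m\cdot y\to x=y)$, $D_{m,n}=\forall x,y\,(s^n(m\cdot x)\neq m\cdot y)$; $\mathcal{X}_m=\mathit{CNF}(\mathit{sk}^\exists(\mathcal{T}'+\neg C_m))$, $\mathcal{Y}_{m,n}=\mathit{CNF}(\mathit{sk}^\exists(\mathcal{T}'+\neg D_{m,n}))$. Skolemization $\mathit{sk}^\exists$/$\mathit{sk}^\forall$ uses canonical Skolem symbols: a strong quantifier $QxA$ with free variables $\vec y$ is replaced by $\mathfrak{s}_{QxA}(\vec y)$, a new function symbol indexed by $QxA$ ($\mathit{sk}^Q$ fixes atoms, commutes with $\wedge,\vee$, $\mathit{sk}^Q(\neg A)=\neg\mathit{sk}^{\overline Q}(A)$, eliminates quantifiers $Q$ and keeps quantifiers $\overline Q$). $\mathit{CNF}$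 gives clause sets of conjunctive normal forms; $\mathcal{E}\vee C=\{E\cup C:E\in\mathcal{E}\}$. Saturation systems: sets of rules $\mathcal{C}/\mathcal{D}$ ($\mathcal{C}$ clause set, $\mathcal{D}$ finite clause set), $+$ = union; a deduction from $\mathcal{C}_0$ is $\mathcal{D}_0=\mathcal{C}_0,\dots,\mathcal{D}_k$ with $\mathcal{D}_{i+1}=\mathcal{D}_i\cup\mathcal{B}_i$ for a rule $\mathcal{D}_i/\mathcal{B}_i$; a refutation has the empty clause in $\mathcal{D}_k$. Sound: any clause $C$ derivable from $\mathcal{C}_0$ has $L(C)\subseteq L(\mathcal{C}_0)$ and $\mathcal{C}_0\models C$; refutationally complete: every inconsistent clause set has a refutation. $\mathrm{Literal}\text{-}\mathrm{AIND}^R_2$: from a clause set containing a clause $\overline{l}(a,a)\vee C$, where $l(x,y)$ is a literal, $a$ is a constant, $l(a,a)$ is ground and $\overline{l}$ denotes the complementary literal, derive $\mathit{CNF}(\neg\,\mathit{sk}^\forall(l(0,a)\wedge\forall x(l(x,a)\to l(s(x),a))))\vee C$, i.e. the clauses $\{\neg l(0,a),l(\sigma,a)\}\cup C$ and $\{\neg l(0,a),\neg l(s(\sigma),a)\}\cup C$ with $\sigma=\mathfrak{s}_{\forall x(l(x,a)\to l(s(x),a))}$. *)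

theory Defs
  imports Main
begin

section \<open>First-order syntax with canonical Skolem symbols\<close>

text \<open>Function symbols are the symbols of linear
arithmetic (0, s, p, +), arbitrary further user symbols, and canonical Skolem
symbols indexed by the quantified formula they replace.\<close>

datatype trm = Var nat | Fn fsym "trm list"
and fsym = FZero | FS | FP | FPlus | FUser nat | FSk form
and form = FEq trm trm | FPred nat "trm list" | FNeg form | FConj form form
  | FDisj form form | FImp form form | FAll nat form | FEx nat form

datatype atm = AEq trm trm | APred nat "trm list"
datatype lit = Pos atm | NegL atm

type_synonym clause = "lit set"
type_synonym clauses = "clause set"

abbreviation zero :: trm where "zero \<equiv> Fn FZero []"
abbreviation sc :: "trm \<Rightarrow> trm" where "sc t \<equiv> Fn FS [t]"
abbreviation pr :: "trm \<Rightarrow> trm" where "pr t \<equiv> Fn FP [t]"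
abbreviation pl :: "trm \<Rightarrow> trm \<Rightarrow> trm" where "pl t u \<equiv> Fn FPlus [t, u]"

fun fv_trm :: "trm \<Rightarrow> nat set" where
  "fv_trm (Var x) = {x}"
| "fv_trm (Fn f ts) = \<Union>(set (map fv_trm ts))"

fun fv_form :: "form \<Rightarrow> nat set" where
  "fv_form (FEq t u) = fv_trm t \<union> fv_trm u"
| "fv_form (FPred p ts) = \<Union>(set (map fv_trm ts))"
| "fv_form (FNeg A) = fv_form A"
| "fv_form (FConj A B) = fv_form A \<union> fv_form B"
| "fv_form (FDisj A B) = fv_form A \<union> fv_form B"
| "fv_form (FImp A B) = fv_form A \<union> fv_form B"
| "fv_form (FAll x A) = fv_form A - {x}"
| "fv_form (FEx x A) = fv_form A - {x}"

fun tsubst :: "(nat \<Rightarrow> trm) \<Rightarrow> trm \<Rightarrow> trm" where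
  "tsubst e (Var x) = e x"
| "tsubst e (Fn f ts) = Fn f (map (tsubst e) ts)"

text \<open>Substitution in formulas (bound variables are protected; no renaming is
performed, which is irrelevant for the closed formulas considered below).\<close>
fun fsubst :: "(nat \<Rightarrow> trm) \<Rightarrow> form \<Rightarrow> form" where
  "fsubst e (FEq t u) = FEq (tsubst e t) (tsubst e u)"
| "fsubst e (FPred p ts) = FPred p (map (tsubst e) ts)"
| "fsubst e (FNeg A) = FNeg (fsubst e A)"
| "fsubst e (FConj A B) = FConj (fsubst e A) (fsubst e B)"
| "fsubst e (FDisj A B) = FDisj (fsubst e A) (fsubst e B)"
| "fsubst e (FImp A B) = FImp (fsubst e A) (fsubst e B)"
| "fsubst e (FAll x A) = FAll x (fsubst (e(x := Var x)) A)"
| "fsubst e (FEx x A) = FEx x (fsubst (e(x := Var x)) A)"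

definition skterm :: "form \<Rightarrow> trm" where
  "skterm \<Phi> = Fn (FSk \<Phi>) (map Var (sorted_list_of_set (fv_form \<Phi>)))"

text \<open>\<open>sk q e A\<close>: with \<open>q = True\<close> this is \<open>sk\<^sup>\<exists>\<close> (eliminates \<open>\<exists>\<close>, keeps \<open>\<forall>\<close>),
with \<open>q = False\<close> it is \<open>sk\<^sup>\<forall>\<close>; the environment \<open>e\<close> records the substitutions of
Skolem terms for the already eliminated outer quantifiers, so that
\<open>sk q Var (\<exists>x A) = sk q Var (A[x := \<s>_{\<exists>xA}(y\<^sub>1..y\<^sub>k)])\<close>.\<close>
fun sk :: "bool \<Rightarrow> (nat \<Rightarrow> trm) \<Rightarrow> form \<Rightarrow> form" where
  "sk q e (FEq t u) = FEq (tsubst e t) (tsubst e u)"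
| "sk q e (FPred p ts) = FPred p (map (tsubst e) ts)"
| "sk q e (FNeg A) = FNeg (sk (\<not> q) e A)"
| "sk q e (FConj A B) = FConj (sk q e A) (sk q e B)"
| "sk q e (FDisj A B) = FDisj (sk q e A) (sk q e B)"
| "sk q e (FImp A B) = FImp (sk (\<not> q) e A) (sk q e B)"
| "sk q e (FAll x A) =
     (if q then FAll x (sk q (e(x := Var x)) A)
      else sk q (e(x := skterm (fsubst e (FAll x A)))) A)"
| "sk q e (FEx x A) =
     (if q then sk q (e(x := skterm (fsubst e (FEx x A)))) A
      else FEx x (sk q (e(x := Var x)) A))"

definition sk_ex :: "form \<Rightarrow> form" where "sk_ex A = sk True Var A"
definition sk_all :: "form \<Rightarrow> form" where "sk_all A = sk False Var A"

definition cdisj :: "clauses \<Rightarrow> clauses \<Rightarrow> clauses" where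
  "cdisj X Y = {C \<union> D | C D. C \<in> X \<and> D \<in> Y}"

text \<open>\<open>cnf True A\<close> is the clause set of a conjunctive normal form of \<open>A\<close>
(\<open>cnf False A\<close> that of \<open>\<not>A\<close>). Quantifiers are dropped: after \<open>sk\<^sup>\<exists>\<close> all
remaining quantifiers are (effectively) universal and free variables of clauses
are implicitly universally quantified.\<close>
fun cnf :: "bool \<Rightarrow> form \<Rightarrow> clauses" where
  "cnf p (FEq t u) = {{if p then Pos (AEq t u) else NegL (AEq t u)}}"
| "cnf p (FPred r ts) = {{if p then Pos (APred r ts) else NegL (APred r ts)}}"
| "cnf p (FNeg A) = cnf (\<not> p) A"
| "cnf p (FConj A B) = (if p then cnf p A \<union> cnf p B else cdisj (cnf p A) (cnf p B))"
| "cnf p (FDisj A B) = (if p then cdisj (cnf p A) (cnf p B) else cnf p A \<union> cnf p B)"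
| "cnf p (FImp A B) = (if p then cdisj (cnf (\<not> p) A) (cnf p B) else cnf (\<not> p) A \<union> cnf p B)"
| "cnf p (FAll x A) = cnf p A"
| "cnf p (FEx x A) = cnf p A"

definition CNF :: "form set \<Rightarrow> clauses" where
  "CNF \<T> = (\<Union>A\<in>\<T>. cnf True A)"

subsection \<open>The theory T' and the clause sets X_m, Y_{m,n}\<close>

definition vx :: nat where "vx = 0"
definition vy :: nat where "vy = 1"
definition vz :: nat where "vz = 2"

abbreviation fneq :: "trm \<Rightarrow> trm \<Rightarrow> form" where "fneq t u \<equiv> FNeg (FEq t u)"

definition Tprime :: "form set" where
  "Tprime = {
     FAll vx (fneq zero (sc (Var vx))),
     FEq (pr zero) zero,
     FAll vx (FEq (pr (sc (Var vx))) (Var vx)),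
     FAll vx (FEq (pl (Var vx) zero) (Var vx)),
     FAll vx (FAll vy (FEq (pl (Var vx) (sc (Var vy))) (sc (pl (Var vx) (Var vy))))),
     FAll vx (FImp (fneq (Var vx) zero) (FEq (Var vx) (sc (pr (Var vx))))),
     FAll vx (FAll vy (FEq (pl (Var vx) (Var vy)) (pl (Var vy) (Var vx)))),
     FAll vx (FAll vy (FAll vz (FEq (pl (pl (Var vx) (Var vy)) (Var vz))
                                     (pl (Var vx) (pl (Var vy) (Var vz)))))),
     FAll vx (FAll vy (FAll vz (FImp (FEq (pl (Var vx) (Var vy)) (pl (Var vx) (Var vz)))
                                     (FEq (Var vy) (Var vz)))))}"

text \<open>\<open>m \<cdot> t = t + (t + ... + (t + t)...)\<close> with \<open>m\<close> copies of \<open>t\<close> (for \<open>m \<ge> 1\<close>;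
the value for \<open>m = 0\<close> is an irrelevant convention).\<close>
fun mtimes :: "nat \<Rightarrow> trm \<Rightarrow> trm" where
  "mtimes 0 t = zero"
| "mtimes (Suc 0) t = t"
| "mtimes (Suc (Suc k)) t = pl t (mtimes (Suc k) t)"

definition spow :: "nat \<Rightarrow> trm \<Rightarrow> trm" where
  "spow n = (\<lambda>u. sc u) ^^ n"

definition Cm :: "nat \<Rightarrow> form" where
  "Cm m = FAll vx (FAll vy (FImp (FEq (mtimes m (Var vx)) (mtimes m (Var vy)))
                                 (FEq (Var vx) (Var vy))))"

definition Dmn :: "nat \<Rightarrow> nat \<Rightarrow> form" where
  "Dmn m n = FAll vx (FAll vy (fneq (spow n (mtimes m (Var vx))) (mtimes m (Var vy))))"

definition Xcl :: "nat \<Rightarrow> clauses" where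
  "Xcl m = CNF (sk_ex ` (Tprime \<union> {FNeg (Cm m)}))"

definition Ycl :: "nat \<Rightarrow> nat \<Rightarrow> clauses" where
  "Ycl m n = CNF (sk_ex ` (Tprime \<union> {FNeg (Dmn m n)}))"

section \<open>Semantics\<close>

text \<open>Structures have a nonempty domain \<open>D\<close> that is a subset of \<open>nat\<close>; since the
language is countable, by Loewenheim-Skolem this yields the usual notions of
satisfiability and entailment.\<close>

fun eval :: "(fsym \<Rightarrow> nat list \<Rightarrow> nat) \<Rightarrow> (nat \<Rightarrow> nat) \<Rightarrow> trm \<Rightarrow> nat" where
  "eval F v (Var x) = v x"
| "eval F v (Fn f ts) = F f (map (eval F v) ts)"

fun atm_true :: "(fsym \<Rightarrow> nat list \<Rightarrow> nat) \<Rightarrow> (nat \<Rightarrow> nat list \<Rightarrow> bool) \<Rightarrow> (nat \<Rightarrow> nat) \<Rightarrow> atm \<Rightarrow> bool" where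
  "atm_true F P v (AEq t u) = (eval F v t = eval F v u)"
| "atm_true F P v (APred p ts) = P p (map (eval F v) ts)"

fun lit_true :: "(fsym \<Rightarrow> nat list \<Rightarrow> nat) \<Rightarrow> (nat \<Rightarrow> nat list \<Rightarrow> bool) \<Rightarrow> (nat \<Rightarrow> nat) \<Rightarrow> lit \<Rightarrow> bool" where
  "lit_true F P v (Pos a) = atm_true F P v a"
| "lit_true F P v (NegL a) = (\<not> atm_true F P v a)"

definition is_struct :: "nat set \<Rightarrow> (fsym \<Rightarrow> nat list \<Rightarrow> nat) \<Rightarrow> bool" where
  "is_struct D F \<longleftrightarrow> D \<noteq> {} \<and> (\<forall>f xs. set xs \<subseteq> D \<longrightarrow> F f xs \<in> D)"

definition clause_true :: "nat set \<Rightarrow> (fsym \<Rightarrow> nat list \<Rightarrow> nat) \<Rightarrow> (nat \<Rightarrow> nat list \<Rightarrow> bool) \<Rightarrow> clause \<Rightarrow> bool" where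
  "clause_true D F P C \<longleftrightarrow> (\<forall>v. range v \<subseteq> D \<longrightarrow> (\<exists>l\<in>C. lit_true F P v l))"

definition is_model :: "nat set \<Rightarrow> (fsym \<Rightarrow> nat list \<Rightarrow> nat) \<Rightarrow> (nat \<Rightarrow> nat list \<Rightarrow> bool) \<Rightarrow> clauses \<Rightarrow> bool" where
  "is_model D F P \<C> \<longleftrightarrow> is_struct D F \<and> (\<forall>C\<in>\<C>. clause_true D F P C)"

definition satisfiable :: "clauses \<Rightarrow> bool" where
  "satisfiable \<C> \<longleftrightarrow> (\<exists>D F P. is_model D F P \<C>)"

definition entails :: "clauses \<Rightarrow> clause \<Rightarrow> bool" where
  "entails \<C> C \<longleftrightarrow> (\<forall>D F P. is_model D F P \<C> \<longrightarrow> clause_true D F P C)"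

fun syms_trm :: "trm \<Rightarrow> ((fsym \<times> nat) + (nat \<times> nat)) set" where
  "syms_trm (Var x) = {}"
| "syms_trm (Fn f ts) = insert (Inl (f, length ts)) (\<Union>(set (map syms_trm ts)))"

fun syms_atm :: "atm \<Rightarrow> ((fsym \<times> nat) + (nat \<times> nat)) set" where
  "syms_atm (AEq t u) = syms_trm t \<union> syms_trm u"
| "syms_atm (APred p ts) = insert (Inr (p, length ts)) (\<Union>(set (map syms_trm ts)))"

fun syms_lit :: "lit \<Rightarrow> ((fsym \<times> nat) + (nat \<times> nat)) set" where
  "syms_lit (Pos a) = syms_atm a"
| "syms_lit (NegL a) = syms_atm a"

definition lang_clause :: "clause \<Rightarrow> ((fsym \<times> nat) + (nat \<times> nat)) set" where
  "lang_clause C = (\<Union>l\<in>C. syms_lit l)"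

definition lang :: "clauses \<Rightarrow> ((fsym \<times> nat) + (nat \<times> nat)) set" where
  "lang \<C> = (\<Union>C\<in>\<C>. lang_clause C)"

section \<open>Saturation systems\<close>

definition clause_set :: "clauses \<Rightarrow> bool" where
  "clause_set \<C> \<longleftrightarrow> (\<forall>C\<in>\<C>. finite C)"

type_synonym sat_system = "(clauses \<times> clauses) set"

definition is_sat_system :: "sat_system \<Rightarrow> bool" where
  "is_sat_system S \<longleftrightarrow>
     (\<forall>(\<C>, \<D>)\<in>S. clause_set \<C> \<and> finite \<D> \<and> clause_set \<D>)"

inductive deducible :: "sat_system \<Rightarrow> clauses \<Rightarrow> clauses \<Rightarrow> bool" for S C0 where
  start: "deducible S C0 C0"
| step: "deducible S C0 \<D> \<Longrightarrow> (\<D>, \<B>) \<in> S \<Longrightarrow> deducible S C0 (\<D> \<union> \<B>)"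

definition derivable :: "sat_system \<Rightarrow> clauses \<Rightarrow> clause \<Rightarrow> bool" where
  "derivable S C0 C \<longleftrightarrow> (\<exists>\<D>. deducible S C0 \<D> \<and> C \<in> \<D>)"

definition refutes :: "sat_system \<Rightarrow> clauses \<Rightarrow> bool" where
  "refutes S C0 \<longleftrightarrow> derivable S C0 {}"

definition sound :: "sat_system \<Rightarrow> bool" where
  "sound S \<longleftrightarrow> (\<forall>C0 C. clause_set C0 \<longrightarrow> derivable S C0 C \<longrightarrow>
                     lang_clause C \<subseteq> lang C0 \<and> entails C0 C)"

definition refut_complete :: "sat_system \<Rightarrow> bool" where
  "refut_complete S \<longleftrightarrow> (\<forall>C0. clause_set C0 \<longrightarrow> \<not> satisfiable C0 \<longrightarrow> refutes S C0)"

section \<open>The rule Literal-AIND^R_2\<close>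

fun asubst :: "(nat \<Rightarrow> trm) \<Rightarrow> atm \<Rightarrow> atm" where
  "asubst e (AEq t u) = AEq (tsubst e t) (tsubst e u)"
| "asubst e (APred p ts) = APred p (map (tsubst e) ts)"

fun lsubst :: "(nat \<Rightarrow> trm) \<Rightarrow> lit \<Rightarrow> lit" where
  "lsubst e (Pos a) = Pos (asubst e a)"
| "lsubst e (NegL a) = NegL (asubst e a)"

fun compl :: "lit \<Rightarrow> lit" where
  "compl (Pos a) = NegL a"
| "compl (NegL a) = Pos a"

fun atm_form :: "atm \<Rightarrow> form" where
  "atm_form (AEq t u) = FEq t u"
| "atm_form (APred p ts) = FPred p ts"

fun lit_form :: "lit \<Rightarrow> form" where
  "lit_form (Pos a) = atm_form a"
| "lit_form (NegL a) = FNeg (atm_form a)"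

definition vars_lit :: "lit \<Rightarrow> nat set" where
  "vars_lit l = fv_form (lit_form l)"

definition linst :: "lit \<Rightarrow> nat \<Rightarrow> nat \<Rightarrow> trm \<Rightarrow> trm \<Rightarrow> lit" where
  "linst l x y t u = lsubst (Var(x := t, y := u)) l"

definition aind_sigma :: "lit \<Rightarrow> nat \<Rightarrow> nat \<Rightarrow> trm \<Rightarrow> trm" where
  "aind_sigma l x y a =
     skterm (FAll x (FImp (lit_form (linst l x y (Var x) a))
                          (lit_form (linst l x y (sc (Var x)) a))))"

definition Literal_AIND :: sat_system where
  "Literal_AIND = {(\<C>, \<B>) | \<C> \<B> l x y c C.
      clause_set \<C> \<and> x \<noteq> y \<and> vars_lit l \<subseteq> {x, y} \<and> finite C \<and>
      insert (compl (linst l x y (Fn c []) (Fn c []))) C \<in> \<C> \<and>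
      \<B> = {insert (compl (linst l x y zero (Fn c [])))
              (insert (linst l x y (aind_sigma l x y (Fn c [])) (Fn c [])) C),
           insert (compl (linst l x y zero (Fn c [])))
              (insert (compl (linst l x y (sc (aind_sigma l x y (Fn c []))) (Fn c []))) C)}}"

end

theory Submission
  imports Defs "HOL-Library.Countable" "HOL-Library.Product_Plus"
begin

text \<open>
The clause sets have a model \<open>G\<^sub>m\<close> in which every clause derivable in
\<open>S + Literal-AIND\<^sup>R\<^sub>2\<close> stays true, so the empty clause is never derived. Its elements are
the standard numbers \<open>k\<close>, encoded as \<open>(0, m k, 0)\<close>, and nonstandard elements \<open>(a, z, r)\<close> with
\<open>a \<ge> 1\<close>, \<open>z \<in> \<int>\<close> and a residue \<open>0 \<le> r < m\<close>; successor adds \<open>m\<close> to \<open>z\<close>, predecessor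
subtracts it, and addition is componentwise (on \<open>r\<close> modulo \<open>m\<close>). Then
\<open>m\<cdot>(1,0,0) = m\<cdot>(1,0,1)\<close> refutes \<open>C\<^sub>m\<close> and \<open>s\<^sup>n(m\<cdot>(1,0,0)) = m\<cdot>(1,n,0)\<close> refutes \<open>D\<^sub>m\<^sub>,\<^sub>n\<close>.
Skolem symbols denote chosen witnesses, which makes the Skolemised clauses true; clauses
derived by \<open>S\<close> stay true by soundness.

\<open>Literal-AIND\<^sup>R\<^sub>2\<close> is sound in \<open>G\<^sub>m\<close> because, as a function of one variable, every term is
affine on the nonstandard elements and on all large enough standard numbers. So an equation
that holds at two consecutive such points holds at all of them, and a literal that is true
at \<open>0\<close> but false somewhere has a boundary point \<open>e\<close> with \<open>l(e)\<close> and \<open>\<not> l(s(e))\<close>; the induction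
Skolem constant \<open>\<sigma>\<close> denotes such a point.
\<close>

section \<open>Models are preserved by sound saturation\<close>

lemma clause_true_empty: "is_struct D F \<Longrightarrow> \<not> clause_true D F P {}"
  unfolding is_struct_def clause_true_def by (auto intro: exI[of _ "\<lambda>_. SOME d. d \<in> D"] some_in_eq)

lemma deducible_preserves_model:
  assumes "is_sat_system S" and "sound S"
    and rule_R: "\<And>\<D> \<B>. (\<D>, \<B>) \<in> R \<Longrightarrow> clause_set \<D> \<Longrightarrow> is_model D F P \<D> \<Longrightarrow>
                     clause_set \<B> \<and> is_model D F P \<B>"
    and "deducible (S \<union> R) C0 \<D>" and "clause_set C0" and "is_model D F P C0"
  shows "clause_set \<D> \<and> is_model D F P \<D>"
  using \<open>deducible (S \<union> R) C0 \<D>\<close>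
proof induction
  case start
  then show ?case using assms(5,6) by simp
next
  case (step \<D> \<B>)
  then have \<D>: "clause_set \<D>" "is_model D F P \<D>" by auto
  have "clause_set \<B> \<and> is_model D F P \<B>"
  proof (cases "(\<D>, \<B>) \<in> S")
    case True
    have "clause_true D F P C" if "C \<in> \<B>" for C
    proof -
      have "derivable S \<D> C"
        unfolding derivable_def using deducible.step[OF deducible.start True] that by blast
      with \<open>sound S\<close> \<D>(1) have "entails \<D> C" by (simp add: sound_def)
      with \<D>(2) show ?thesis by (simp add: entails_def)
    qed
    moreover have "clause_set \<B>"
      using \<open>is_sat_system S\<close> True by (auto simp: is_sat_system_def)
    ultimately show ?thesis using \<D>(2) by (simp add: is_model_def)
  next
    case False
    with step.hyps(2) have "(\<D>, \<B>) \<in> R" by simp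
    then show ?thesis using rule_R \<D> by simp
  qed
  with \<D> show ?case by (auto simp: clause_set_def is_model_def)
qed

lemma not_refutes_if_model:
  assumes "is_sat_system S" and "sound S"
    and "\<And>\<D> \<B>. (\<D>, \<B>) \<in> R \<Longrightarrow> clause_set \<D> \<Longrightarrow> is_model D F P \<D> \<Longrightarrow>
                clause_set \<B> \<and> is_model D F P \<B>"
    and "clause_set C0" and "is_model D F P C0"
  shows "\<not> refutes (S \<union> R) C0"
proof
  assume "refutes (S \<union> R) C0"
  then obtain \<D> where "deducible (S \<union> R) C0 \<D>" "{} \<in> \<D>"
    unfolding refutes_def derivable_def by blast
  with deducible_preserves_model[OF assms(1-3) _ assms(4,5)] have "clause_true D F P {}"
    by (simp add: is_model_def)
  with assms(5) clause_true_empty show False by (simp add: is_model_def)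
qed

section \<open>The structure \<open>G\<^sub>m\<close>\<close>

type_synonym G = "int \<times> int \<times> int"

abbreviation gzero :: G where "gzero \<equiv> (0, 0, 0)"

definition gnum :: "nat \<Rightarrow> nat \<Rightarrow> G" where
  "gnum m k = (0, int m * int k, 0)"

definition nonstd :: "nat \<Rightarrow> G set" where
  "nonstd m = {(a, z, r). 1 \<le> a \<and> 0 \<le> r \<and> r < int m}"

definition gdom :: "nat \<Rightarrow> G set" where
  "gdom m = range (gnum m) \<union> nonstd m"

fun gsuc :: "nat \<Rightarrow> G \<Rightarrow> G" where
  "gsuc m (a, z, r) = (a, z + int m, r)"

fun gpred :: "nat \<Rightarrow> G \<Rightarrow> G" where
  "gpred m (a, z, r) = (if (a, z, r) = gzero then gzero else (a, z - int m, r))"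

fun gplus :: "nat \<Rightarrow> G \<Rightarrow> G \<Rightarrow> G" where
  "gplus m (a, z, r) (a', z', r') = (a + a', z + z', (r + r') mod int m)"

fun gscale :: "nat \<Rightarrow> nat \<Rightarrow> G \<Rightarrow> G" where
  "gscale m k (a, z, r) = (int k * a, int k * z, (int k * r) mod int m)"

lemma gnum_0 [simp]: "gnum m 0 = gzero"
  by (simp add: gnum_def)

lemma gsuc_gnum [simp]: "gsuc m (gnum m k) = gnum m (Suc k)"
  by (simp add: gnum_def algebra_simps)

lemma gnum_in_gdom [simp]: "gnum m k \<in> gdom m"
  by (simp add: gdom_def)

lemma nonstd_subset_gdom: "nonstd m \<subseteq> gdom m"
  by (auto simp: gdom_def)

lemma gzero_in_gdom [simp]: "gzero \<in> gdom m"
  using gnum_in_gdom[of m 0] by simp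

lemma gdom_cases [consumes 1, case_names gnum nonstd]:
  assumes "d \<in> gdom m"
  obtains k where "d = gnum m k"
  | a z r where "d = (a, z, r)" "1 \<le> a" "0 \<le> r" "r < int m"
  using assms by (auto simp: gdom_def nonstd_def)

lemma gdom_fst_nonneg: "d \<in> gdom m \<Longrightarrow> 0 \<le> fst d"
  by (auto elim: gdom_cases simp: gnum_def)

lemma gdom_residue: "(a, z, r) \<in> gdom m \<Longrightarrow> r mod int m = r"
  by (auto elim!: gdom_cases simp: gnum_def)

lemma gpred_gnum_Suc [simp]: "gpred m (gnum m (Suc k)) = gnum m k"
proof (cases "m = 0")
  case False
  then have "int m * int (Suc k) \<noteq> 0" by simp
  then show ?thesis by (simp add: gnum_def algebra_simps)
qed (simp add: gnum_def)

lemma gsuc_in_gdom: "d \<in> gdom m \<Longrightarrow> gsuc m d \<in> gdom m"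
  by (erule gdom_cases) (simp, auto simp: gdom_def nonstd_def)

lemma gpred_in_gdom: "d \<in> gdom m \<Longrightarrow> gpred m d \<in> gdom m"
proof (erule gdom_cases)
  fix k assume "d = gnum m k"
  then show ?thesis by (cases k) simp_all
qed (auto simp: gdom_def nonstd_def)

lemma gplus_in_gdom: "0 < m \<Longrightarrow> d \<in> gdom m \<Longrightarrow> e \<in> gdom m \<Longrightarrow> gplus m d e \<in> gdom m"
proof (erule gdom_cases; erule gdom_cases)
  fix k l assume "d = gnum m k" "e = gnum m l"
  then have "gplus m d e = gnum m (k + l)" by (simp add: gnum_def algebra_simps)
  then show ?thesis by simp
qed (auto simp: gdom_def nonstd_def gnum_def)

lemma gnum_eq_gzero_iff [simp]: "0 < m \<Longrightarrow> gnum m k = gzero \<longleftrightarrow> k = 0"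
  by (simp add: gnum_def)

lemma gpred_gzero [simp]: "gpred m gzero = gzero"
  by simp

lemma gsuc_neq_gzero: "0 < m \<Longrightarrow> d \<in> gdom m \<Longrightarrow> gsuc m d \<noteq> gzero"
  by (erule gdom_cases) simp_all

lemma gpred_gsuc: "0 < m \<Longrightarrow> d \<in> gdom m \<Longrightarrow> gpred m (gsuc m d) = d"
  by (erule gdom_cases) simp_all

lemma gsuc_gpred: "d \<noteq> gzero \<Longrightarrow> gsuc m (gpred m d) = d"
  by (cases d) auto

lemma gplus_gzero: "d \<in> gdom m \<Longrightarrow> gplus m d gzero = d"
  by (erule gdom_cases) (simp_all add: gnum_def)

lemma gplus_gsuc: "gplus m d (gsuc m e) = gsuc m (gplus m d e)"
  by (cases d; cases e) simp

lemma gplus_commute: "gplus m d e = gplus m e d"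
  by (cases d; cases e) (simp add: add.commute)

lemma gplus_assoc: "gplus m (gplus m d e) f = gplus m d (gplus m e f)"
  by (cases d; cases e; cases f) (simp add: add.assoc mod_add_left_eq mod_add_right_eq)

lemma gplus_left_commute: "gplus m d (gplus m e f) = gplus m e (gplus m d f)"
  by (metis gplus_assoc gplus_commute)

lemma gplus_left_cancel_iff:
  assumes "e \<in> gdom m" and "e' \<in> gdom m"
  shows "gplus m d e = gplus m d e' \<longleftrightarrow> e = e'"
proof
  assume eq: "gplus m d e = gplus m d e'"
  obtain a z r a' z' r' where e: "e = (a, z, r)" and e': "e' = (a', z', r')"
    by (cases e; cases e')
  with eq have "a = a'" "z = z'" "r mod int m = r' mod int m"
    by (cases d; auto simp: mod_eq_dvd_iff)+
  with assms show "e = e'" unfolding e e' by (simp add: gdom_residue)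
qed simp

lemma gsuc_funpow: "(gsuc m ^^ n) (a, z, r) = (a, z + int n * int m, r)"
  by (induction n) (simp_all add: algebra_simps)

text \<open>A Skolem symbol denotes a chosen witness and ignores its arguments. This is adequate
because every Skolem term occurring below comes from a closed formula.\<close>

fun gterm :: "nat \<Rightarrow> trm \<Rightarrow> (nat \<Rightarrow> G) \<Rightarrow> G"
  and gfun :: "nat \<Rightarrow> fsym \<Rightarrow> G list \<Rightarrow> G"
  and gholds :: "nat \<Rightarrow> form \<Rightarrow> (nat \<Rightarrow> G) \<Rightarrow> bool"
  and gwitness :: "nat \<Rightarrow> form \<Rightarrow> G \<Rightarrow> bool" where
  "gterm m (Var x) v = v x"
| "gterm m (Fn f ts) v = gfun m f (map (\<lambda>t. gterm m t v) ts)"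
| "gfun m FZero ds = gzero"
| "gfun m FS ds = (case ds of [d] \<Rightarrow> gsuc m d | _ \<Rightarrow> gzero)"
| "gfun m FP ds = (case ds of [d] \<Rightarrow> gpred m d | _ \<Rightarrow> gzero)"
| "gfun m FPlus ds = (case ds of [d, e] \<Rightarrow> gplus m d e | _ \<Rightarrow> gzero)"
| "gfun m (FUser k) ds = gzero"
| "gfun m (FSk \<phi>) ds =
     (if \<exists>e\<in>gdom m. gwitness m \<phi> e then SOME e. e \<in> gdom m \<and> gwitness m \<phi> e else gzero)"
| "gholds m (FEq t u) v = (gterm m t v = gterm m u v)"
| "gholds m (FPred p ts) v = False"
| "gholds m (FNeg A) v = (\<not> gholds m A v)"
| "gholds m (FConj A B) v = (gholds m A v \<and> gholds m B v)"
| "gholds m (FDisj A B) v = (gholds m A v \<or> gholds m B v)"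
| "gholds m (FImp A B) v = (gholds m A v \<longrightarrow> gholds m B v)"
| "gholds m (FAll x A) v = (\<forall>d\<in>gdom m. gholds m A (v(x := d)))"
| "gholds m (FEx x A) v = (\<exists>d\<in>gdom m. gholds m A (v(x := d)))"
| "gwitness m (FAll x A) e = (\<not> gholds m A ((\<lambda>_. gzero)(x := e)))"
| "gwitness m (FEx x A) e = gholds m A ((\<lambda>_. gzero)(x := e))"
| "gwitness m _ e = False"

definition glit :: "nat \<Rightarrow> (nat \<Rightarrow> G) \<Rightarrow> lit \<Rightarrow> bool" where
  "glit m v l = gholds m (lit_form l) v"

lemma glit_simps [simp]:
  "glit m v (Pos (AEq t u)) = (gterm m t v = gterm m u v)"
  "glit m v (Pos (APred p ts)) = False"
  "glit m v (NegL a) = (\<not> glit m v (Pos a))"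
  by (simp_all add: glit_def)

definition gtrue :: "nat \<Rightarrow> clause \<Rightarrow> bool" where
  "gtrue m C \<longleftrightarrow> (\<forall>v. range v \<subseteq> gdom m \<longrightarrow> (\<exists>l\<in>C. glit m v l))"

lemma trm_induct [case_names Var Fn]:
  assumes "\<And>x. P (Var x)" and "\<And>f ts. (\<And>t. t \<in> set ts \<Longrightarrow> P t) \<Longrightarrow> P (Fn f ts)"
  shows "P t"
  by (rule trm.induct[of P "\<lambda>_. True" "\<lambda>_. True"]) (auto intro: assms)

lemma form_induct [case_names FEq FPred FNeg FConj FDisj FImp FAll FEx]:
  assumes "\<And>t u. P (FEq t u)" and "\<And>p ts. P (FPred p ts)" and "\<And>A. P A \<Longrightarrow> P (FNeg A)"
    and "\<And>A B. P A \<Longrightarrow> P B \<Longrightarrow> P (FConj A B)" and "\<And>A B. P A \<Longrightarrow> P B \<Longrightarrow> P (FDisj A B)"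
    and "\<And>A B. P A \<Longrightarrow> P B \<Longrightarrow> P (FImp A B)"
    and "\<And>x A. P A \<Longrightarrow> P (FAll x A)" and "\<And>x A. P A \<Longrightarrow> P (FEx x A)"
  shows "P A"
  by (rule form.induct[of "\<lambda>_. True" "\<lambda>_. True" P]) (auto intro: assms)

lemma gholds_lit_form [simp]: "gholds m (lit_form l) v = glit m v l"
  by (simp add: glit_def)

lemma glit_compl [simp]: "glit m v (compl l) = (\<not> glit m v l)"
  by (cases l) (simp_all add: glit_def)

lemma gfun_FSk_witness:
  assumes "\<exists>e\<in>gdom m. gwitness m \<phi> e"
  shows "gfun m (FSk \<phi>) ds \<in> gdom m \<and> gwitness m \<phi> (gfun m (FSk \<phi>) ds)"
  using someI_ex[of "\<lambda>e. e \<in> gdom m \<and> gwitness m \<phi> e"] assms by auto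

lemma gfun_in_gdom: "0 < m \<Longrightarrow> set ds \<subseteq> gdom m \<Longrightarrow> gfun m f ds \<in> gdom m"
proof (cases f)
  case (FSk \<phi>)
  then show ?thesis using gfun_FSk_witness[of m \<phi> ds] by auto
qed (auto split: list.split intro: gsuc_in_gdom gpred_in_gdom gplus_in_gdom
          simp del: gsuc.simps gpred.simps gplus.simps)

lemma gterm_tsubst: "gterm m (tsubst e t) v = gterm m t (\<lambda>z. gterm m (e z) v)"
  by (induction t rule: trm_induct) (simp_all add: comp_def cong: map_cong)

lemma gterm_cong: "(\<And>z. z \<in> fv_trm t \<Longrightarrow> v z = v' z) \<Longrightarrow> gterm m t v = gterm m t v'"
proof (induction t rule: trm_induct)
  case (Fn f ts)
  then have "map (\<lambda>t. gterm m t v) ts = map (\<lambda>t. gterm m t v') ts" by auto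
  then show ?case by (simp only: gterm.simps)
qed simp

lemma gholds_cong: "(\<And>z. z \<in> fv_form A \<Longrightarrow> v z = v' z) \<Longrightarrow> gholds m A v = gholds m A v'"
proof (induction A arbitrary: v v' rule: form_induct)
  case (FEq t u)
  then show ?case using gterm_cong[of t v v' m] gterm_cong[of u v v' m] by simp
next
  case (FNeg A)
  have "gholds m A v = gholds m A v'" by (rule FNeg.IH) (simp add: FNeg.prems)
  then show ?case by simp
next
  case (FConj A B)
  have "gholds m A v = gholds m A v'" "gholds m B v = gholds m B v'"
    by (rule FConj.IH; simp add: FConj.prems)+
  then show ?case by simp
next
  case (FDisj A B)
  have "gholds m A v = gholds m A v'" "gholds m B v = gholds m B v'"
    by (rule FDisj.IH; simp add: FDisj.prems)+
  then show ?case by simp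
next
  case (FImp A B)
  have "gholds m A v = gholds m A v'" "gholds m B v = gholds m B v'"
    by (rule FImp.IH; simp add: FImp.prems)+
  then show ?case by simp
next
  case (FAll x A)
  have "gholds m A (v(x := d)) = gholds m A (v'(x := d))" for d
    by (rule FAll.IH) (simp add: FAll.prems)
  then show ?case by simp
next
  case (FEx x A)
  have "gholds m A (v(x := d)) = gholds m A (v'(x := d))" for d
    by (rule FEx.IH) (simp add: FEx.prems)
  then show ?case by simp
qed simp

definition model_dom :: "nat \<Rightarrow> nat set" where
  "model_dom m = to_nat ` gdom m"

definition model_fun :: "nat \<Rightarrow> fsym \<Rightarrow> nat list \<Rightarrow> nat" where
  "model_fun m f ns = to_nat (gfun m f (map from_nat ns))"

lemma eval_model_fun:
  assumes "range v \<subseteq> model_dom m"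
  shows "eval (model_fun m) v t = to_nat (gterm m t (from_nat \<circ> v))"
proof (induction t rule: trm_induct)
  case (Var x)
  have "v x \<in> model_dom m" using assms by blast
  then obtain d :: G where "v x = to_nat d" unfolding model_dom_def by blast
  then show ?case by simp
next
  case (Fn f ts)
  then have args: "map (from_nat \<circ> eval (model_fun m) v) ts = map (\<lambda>t. gterm m t (from_nat \<circ> v)) ts"
    by (simp add: comp_def)
  have "eval (model_fun m) v (Fn f ts) = to_nat (gfun m f (map (from_nat \<circ> eval (model_fun m) v) ts))"
    by (simp add: model_fun_def)
  then show ?case by (simp only: args gterm.simps)
qed

lemma lit_true_model_fun:
  assumes "range v \<subseteq> model_dom m"
  shows "lit_true (model_fun m) (\<lambda>_ _. False) v l = glit m (from_nat \<circ> v) l"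
proof -
  have "atm_true (model_fun m) (\<lambda>_ _. False) v a = glit m (from_nat \<circ> v) (Pos a)" for a
    by (cases a) (simp_all add: eval_model_fun[OF assms])
  then show ?thesis by (cases l) simp_all
qed

lemma clause_true_model_iff:
  "clause_true (model_dom m) (model_fun m) (\<lambda>_ _. False) C \<longleftrightarrow> gtrue m C"
proof
  assume C: "clause_true (model_dom m) (model_fun m) (\<lambda>_ _. False) C"
  show "gtrue m C" unfolding gtrue_def
  proof (intro allI impI)
    fix u :: "nat \<Rightarrow> G" assume "range u \<subseteq> gdom m"
    then have u: "range (to_nat \<circ> u) \<subseteq> model_dom m" by (auto simp: model_dom_def)
    with C obtain l where "l \<in> C" "lit_true (model_fun m) (\<lambda>_ _. False) (to_nat \<circ> u) l"
      unfolding clause_true_def by blast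
    then show "\<exists>l\<in>C. glit m u l" using lit_true_model_fun[OF u] by (auto simp: comp_def)
  qed
next
  assume C: "gtrue m C"
  show "clause_true (model_dom m) (model_fun m) (\<lambda>_ _. False) C" unfolding clause_true_def
  proof (intro allI impI)
    fix v :: "nat \<Rightarrow> nat" assume v: "range v \<subseteq> model_dom m"
    then have "range (from_nat \<circ> v) \<subseteq> gdom m" by (auto simp: model_dom_def)
    with C obtain l where "l \<in> C" "glit m (from_nat \<circ> v) l" unfolding gtrue_def by blast
    then show "\<exists>l\<in>C. lit_true (model_fun m) (\<lambda>_ _. False) v l" using lit_true_model_fun[OF v] by auto
  qed
qed

lemma is_struct_model: "0 < m \<Longrightarrow> is_struct (model_dom m) (model_fun m)"
proof -
  assume "0 < m"
  have "model_fun m f ns \<in> model_dom m" if "set ns \<subseteq> model_dom m" for f ns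
  proof -
    from that have "set (map from_nat ns) \<subseteq> gdom m" by (auto simp: model_dom_def)
    with \<open>0 < m\<close> show ?thesis by (simp add: model_fun_def model_dom_def gfun_in_gdom)
  qed
  moreover have "model_dom m \<noteq> {}" unfolding model_dom_def using gzero_in_gdom[of m] by blast
  ultimately show ?thesis by (simp add: is_struct_def)
qed

lemma is_model_iff_gtrue:
  "0 < m \<Longrightarrow> is_model (model_dom m) (model_fun m) (\<lambda>_ _. False) \<C> \<longleftrightarrow> (\<forall>C\<in>\<C>. gtrue m C)"
  by (simp add: is_model_def is_struct_model clause_true_model_iff)

fun qfree :: "form \<Rightarrow> bool" where
  "qfree (FNeg A) = qfree A"
| "qfree (FConj A B) = (qfree A \<and> qfree B)"
| "qfree (FDisj A B) = (qfree A \<and> qfree B)"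
| "qfree (FImp A B) = (qfree A \<and> qfree B)"
| "qfree (FAll x A) = False"
| "qfree (FEx x A) = False"
| "qfree _ = True"

lemma qfree_fsubst: "qfree A \<Longrightarrow> qfree (fsubst e A)"
  by (induction A rule: form_induct) simp_all

lemma sk_qfree: "qfree A \<Longrightarrow> sk q e A = fsubst e A"
  by (induction A arbitrary: q rule: form_induct) simp_all

lemma gholds_fsubst: "qfree A \<Longrightarrow> gholds m (fsubst e A) v = gholds m A (\<lambda>z. gterm m (e z) v)"
  by (induction A rule: form_induct) (simp_all add: gterm_tsubst comp_def)

lemma lit_form_lsubst: "lit_form (lsubst e l) = fsubst e (lit_form l)"
proof -
  have "atm_form (asubst e a) = fsubst e (atm_form a)" for a by (cases a) simp_all
  then show ?thesis by (cases l) simp_all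
qed

lemma qfree_lit_form: "qfree (lit_form l)"
proof -
  have "qfree (atm_form a)" for a by (cases a) simp_all
  then show ?thesis by (cases l) simp_all
qed

lemma glit_lsubst: "glit m v (lsubst e l) = glit m (\<lambda>z. gterm m (e z) v) l"
  unfolding glit_def lit_form_lsubst by (rule gholds_fsubst[OF qfree_lit_form])

lemma glit_cong: "(\<And>z. z \<in> vars_lit l \<Longrightarrow> v z = v' z) \<Longrightarrow> glit m v l = glit m v' l"
  unfolding glit_def vars_lit_def by (rule gholds_cong)

fun universal :: "bool \<Rightarrow> form \<Rightarrow> bool" where
  "universal p (FNeg A) = universal (\<not> p) A"
| "universal p (FConj A B) = (universal p A \<and> universal p B)"
| "universal p (FDisj A B) = (universal p A \<and> universal p B)"
| "universal p (FImp A B) = (universal (\<not> p) A \<and> universal p B)"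
| "universal p (FAll x A) = (p \<and> universal p A)"
| "universal p (FEx x A) = (\<not> p \<and> universal p A)"
| "universal p _ = True"

lemma universal_if_qfree: "qfree A \<Longrightarrow> universal p A"
  by (induction A arbitrary: p rule: form_induct) simp_all

lemma cnf_universal_true:
  assumes "universal p A" and "range v \<subseteq> gdom m" and "gholds m A v = p" and "C \<in> cnf p A"
  shows "\<exists>l\<in>C. glit m v l"
proof -
  have v: "v x \<in> gdom m" for x using assms(2) by blast
  have "\<forall>p C. universal p A \<longrightarrow> gholds m A v = p \<longrightarrow> C \<in> cnf p A \<longrightarrow> (\<exists>l\<in>C. glit m v l)"
  proof (induction A rule: form_induct)
    case (FAll x A)
    have "gholds m (FAll x A) v \<Longrightarrow> gholds m A v"
      using v[of x] by (auto dest!: bspec[of _ _ "v x"])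
    with FAll show ?case by auto
  next
    case (FEx x A)
    have "\<not> gholds m (FEx x A) v \<Longrightarrow> \<not> gholds m A v"
      using v[of x] by (auto dest!: bspec[of _ _ "v x"])
    with FEx show ?case by auto
  qed (auto simp: cdisj_def)
  with assms show ?thesis by blast
qed

lemma gtrue_cnf:
  assumes "universal True A" and "\<And>v. range v \<subseteq> gdom m \<Longrightarrow> gholds m A v" and "C \<in> cnf True A"
  shows "gtrue m C"
  unfolding gtrue_def using cnf_universal_true[OF assms(1) _ _ assms(3)] assms(2) by blast

lemma tsubst_Var [simp]: "tsubst Var t = t"
proof (induction t rule: trm_induct)
  case (Fn f ts)
  then have "map (tsubst Var) ts = ts" by (intro map_idI) simp
  then show ?case by simp
qed simp

lemma map_tsubst_Var [simp]: "map (tsubst Var) ts = ts"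
  by (rule map_idI) simp

lemma fsubst_Var [simp]: "fsubst Var A = A"
  by (induction A rule: form_induct) simp_all

lemma gterm_skterm [simp]: "gterm m (skterm \<phi>) v = gfun m (FSk \<phi>) []"
  by (simp add: skterm_def)

lemma gtrue_cnf_sk_ex_counterexample:
  assumes A: "qfree A" "fv_form A \<subseteq> {x, y}" "x \<noteq> y"
    and d: "d1 \<in> gdom m" "d2 \<in> gdom m" "\<not> gholds m A ((\<lambda>_. gzero)(x := d1, y := d2))"
    and C: "C \<in> cnf True (sk_ex (FNeg (FAll x (FAll y A))))"
  shows "gtrue m C"
proof -
  define \<phi> where "\<phi> = FAll x (FAll y A)"
  define \<psi> where "\<psi> = FAll y (fsubst (Var(x := skterm \<phi>)) A)"
  define e where "e = Var(x := skterm \<phi>, y := skterm \<psi>)"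
  define w1 where "w1 = gfun m (FSk \<phi>) []"
  define w2 where "w2 = gfun m (FSk \<psi>) []"
  have upd: "(Var(x := t))(y := Var y) = Var(x := t)" for t
    using A(3) by auto
  have sk: "sk_ex (FNeg \<phi>) = FNeg (fsubst e A)"
    by (simp add: sk_ex_def \<phi>_def \<psi>_def e_def upd sk_qfree A(1))
  have at_w1: "gholds m A (\<lambda>z. gterm m ((Var(x := skterm \<phi>)) z) ((\<lambda>_. gzero)(y := d)))
      = gholds m A ((\<lambda>_. gzero)(x := w1, y := d))" for d
    by (rule gholds_cong) (use A(2,3) in \<open>auto simp: w1_def\<close>)
  have "\<exists>d\<in>gdom m. gwitness m \<phi> d"
    using d by (auto simp: \<phi>_def)
  then have "w1 \<in> gdom m" "\<exists>d\<in>gdom m. \<not> gholds m A ((\<lambda>_. gzero)(x := w1, y := d))"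
    using gfun_FSk_witness[of m \<phi> "[]"] by (auto simp: w1_def \<phi>_def)
  moreover have witness_\<psi>: "gwitness m \<psi> d \<longleftrightarrow> \<not> gholds m A ((\<lambda>_. gzero)(x := w1, y := d))" for d
    by (simp only: \<psi>_def gwitness.simps gholds_fsubst[OF A(1)] at_w1)
  ultimately have w2: "\<not> gholds m A ((\<lambda>_. gzero)(x := w1, y := w2))"
    using gfun_FSk_witness[of m \<psi> "[]"] unfolding w2_def by blast
  have "gholds m (sk_ex (FNeg \<phi>)) v" for v
  proof -
    have "gholds m A (\<lambda>z. gterm m (e z) v) = gholds m A ((\<lambda>_. gzero)(x := w1, y := w2))"
      by (rule gholds_cong) (use A(2,3) in \<open>auto simp: e_def w1_def w2_def\<close>)
    with w2 show ?thesis by (simp add: sk gholds_fsubst A(1))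
  qed
  moreover have "universal True (sk_ex (FNeg \<phi>))"
    by (simp add: sk universal_if_qfree qfree_fsubst A(1))
  ultimately show ?thesis using gtrue_cnf C by (simp add: \<phi>_def)
qed

lemma gterm_mtimes:
  assumes "gterm m t v \<in> gdom m"
  shows "gterm m (mtimes k t) v = gscale m k (gterm m t v)"
proof (induction k)
  case 0
  show ?case by (cases "gterm m t v") simp
next
  case (Suc k)
  obtain a z r where d: "gterm m t v = (a, z, r)" by (cases "gterm m t v")
  show ?case
  proof (cases k)
    case 0
    then show ?thesis using assms by (simp add: d gdom_residue)
  next
    case (Suc j)
    with Suc.IH show ?thesis by (simp add: d mod_add_right_eq algebra_simps)
  qed
qed

lemma gterm_spow: "gterm m (spow n t) v = (gsuc m ^^ n) (gterm m t v)"
  by (induction n) (simp_all add: spow_def)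

lemma Tprime_gtrue:
  assumes m: "0 < m" and A: "A \<in> Tprime" and C: "C \<in> cnf True (sk_ex A)"
  shows "gtrue m C"
proof (rule gtrue_cnf[OF _ _ C])
  show "universal True (sk_ex A)"
    using A by (auto simp: Tprime_def sk_ex_def)
next
  fix v :: "nat \<Rightarrow> G" assume "range v \<subseteq> gdom m"
  then have v: "v z \<in> gdom m" for z by blast
  show "gholds m (sk_ex A) v"
    using A unfolding Tprime_def
    by (elim insertE emptyE)
      (simp_all add: sk_ex_def vx_def vy_def vz_def gsuc_neq_gzero[OF m, THEN not_sym]
        gpred_gsuc[OF m] gplus_gzero gplus_gsuc gplus_assoc gsuc_gpred gplus_left_cancel_iff
        gplus_commute gplus_left_commute
        del: gsuc.simps gpred.simps gplus.simps)
qed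

lemma clause_set_CNF: "clause_set (CNF \<T>)"
proof -
  have "\<forall>p. \<forall>C\<in>cnf p A. finite C" for A
    by (induction A rule: form_induct) (auto simp: cdisj_def)
  then show ?thesis by (auto simp: clause_set_def CNF_def)
qed

lemma CNF_Tprime_gtrue:
  assumes "0 < m" and "\<And>C. C \<in> cnf True (sk_ex B) \<Longrightarrow> gtrue m C"
    and "C \<in> CNF (sk_ex ` (Tprime \<union> {B}))"
  shows "gtrue m C"
  using assms Tprime_gtrue unfolding CNF_def by blast

lemma fv_mtimes: "fv_trm (mtimes k t) \<subseteq> fv_trm t"
  by (induction k t rule: mtimes.induct) auto

lemma fv_spow: "fv_trm (spow n t) = fv_trm t"
  by (induction n) (simp_all add: spow_def)

lemma Xcl_gtrue:
  assumes "1 < m" and "C \<in> Xcl m"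
  shows "gtrue m C"
proof (rule CNF_Tprime_gtrue)
  show "C \<in> CNF (sk_ex ` (Tprime \<union> {FNeg (Cm m)}))" using assms(2) by (simp add: Xcl_def)
  fix D assume D: "D \<in> cnf True (sk_ex (FNeg (Cm m)))"
  define d1 d2 :: G where "d1 = (1, 0, 0)" and "d2 = (1, 0, 1)"
  have d: "d1 \<in> gdom m" "d2 \<in> gdom m"
    using assms(1) by (auto simp: d1_def d2_def gdom_def nonstd_def)
  show "gtrue m D"
  proof (rule gtrue_cnf_sk_ex_counterexample[OF _ _ _ d])
    show "\<not> gholds m (FImp (FEq (mtimes m (Var vx)) (mtimes m (Var vy))) (FEq (Var vx) (Var vy)))
              ((\<lambda>_. gzero)(vx := d1, vy := d2))"
      using d by (simp add: gterm_mtimes vx_def vy_def d1_def d2_def)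
  qed (use D in \<open>auto simp: Cm_def vx_def vy_def dest!: fv_mtimes[THEN subsetD]\<close>)
qed (use assms(1) in simp)

lemma Ycl_gtrue:
  assumes "0 < m" and "C \<in> Ycl m n"
  shows "gtrue m C"
proof (rule CNF_Tprime_gtrue)
  show "C \<in> CNF (sk_ex ` (Tprime \<union> {FNeg (Dmn m n)}))" using assms(2) by (simp add: Ycl_def)
  fix D assume D: "D \<in> cnf True (sk_ex (FNeg (Dmn m n)))"
  define d1 d2 :: G where "d1 = (1, 0, 0)" and "d2 = (1, int n, 0)"
  have d: "d1 \<in> gdom m" "d2 \<in> gdom m"
    using assms(1) by (auto simp: d1_def d2_def gdom_def nonstd_def)
  show "gtrue m D"
  proof (rule gtrue_cnf_sk_ex_counterexample[OF _ _ _ d])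
    show "\<not> gholds m (fneq (spow n (mtimes m (Var vx))) (mtimes m (Var vy)))
              ((\<lambda>_. gzero)(vx := d1, vy := d2))"
      using d by (simp add: gterm_mtimes gterm_spow gsuc_funpow vx_def vy_def d1_def d2_def)
  qed (use D in \<open>auto simp: Dmn_def fv_spow vx_def vy_def dest!: fv_mtimes[THEN subsetD]\<close>)
qed (use assms(1) in simp)

section \<open>Terms are affine on a tail of \<open>G\<^sub>m\<close>\<close>

fun gaffine :: "nat \<Rightarrow> int \<Rightarrow> G \<Rightarrow> G \<Rightarrow> G" where
  "gaffine m k (ca, cz, cr) (a, z, r) = (k * a + ca, k * z + cz, (k * r + cr) mod int m)"

definition tail :: "nat \<Rightarrow> nat \<Rightarrow> G set" where
  "tail m N = gnum m ` {N..} \<union> nonstd m"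

definition affine_on_tail :: "nat \<Rightarrow> (G \<Rightarrow> G) \<Rightarrow> int \<Rightarrow> G \<Rightarrow> nat \<Rightarrow> bool" where
  "affine_on_tail m f k c N \<longleftrightarrow> 0 \<le> k \<and> 0 \<le> fst c \<and> (\<forall>d\<in>tail m N. f d = gaffine m k c d)"

lemma nonstd_subset_tail: "nonstd m \<subseteq> tail m N"
  by (simp add: tail_def)

lemma gnum_in_tail: "N \<le> n \<Longrightarrow> gnum m n \<in> tail m N"
  by (simp add: tail_def)

lemma tail_antimono: "N \<le> N' \<Longrightarrow> tail m N' \<subseteq> tail m N"
  by (auto simp: tail_def)

lemma gsuc_in_tail:
  assumes "d \<in> tail m N"
  shows "gsuc m d \<in> tail m N"
proof -
  from assms consider n where "d = gnum m n" "N \<le> n" | "d \<in> nonstd m"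
    by (auto simp: tail_def)
  then show ?thesis by cases (auto simp: gnum_in_tail tail_def nonstd_def)
qed

lemma affine_on_tail_id: "0 < m \<Longrightarrow> affine_on_tail m (\<lambda>d. d) 1 gzero 0"
  by (auto simp: affine_on_tail_def tail_def gnum_def nonstd_def)

lemma gaffine_0: "gaffine m 0 (ca, cz, cr) d = (ca, cz, cr mod int m)"
  by (cases d) simp

lemma affine_on_tail_const:
  assumes "c \<in> gdom m"
  shows "affine_on_tail m (\<lambda>_. c) 0 c 0"
proof -
  obtain ca cz cr where c: "c = (ca, cz, cr)" by (cases c)
  with assms show ?thesis
    using gdom_fst_nonneg[OF assms] by (simp add: affine_on_tail_def gaffine_0 gdom_residue)
qed

lemma affine_on_tail_gsuc:
  "affine_on_tail m f k c N \<Longrightarrow> affine_on_tail m (\<lambda>d. gsuc m (f d)) k (gsuc m c) N"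
  unfolding affine_on_tail_def by (cases c) (auto split: prod.split)

lemma gplus_gaffine: "gplus m (gaffine m k c d) (gaffine m k' c' d) = gaffine m (k + k') (c + c') d"
  by (cases c; cases c'; cases d) (simp add: mod_add_eq algebra_simps)

lemma affine_on_tail_gplus:
  assumes "affine_on_tail m f k c N" and "affine_on_tail m f' k' c' N'"
  shows "affine_on_tail m (\<lambda>d. gplus m (f d) (f' d)) (k + k') (c + c') (max N N')"
proof -
  have "f d = gaffine m k c d" "f' d = gaffine m k' c' d" if "d \<in> tail m (max N N')" for d
    using assms that tail_antimono[of N "max N N'" m] tail_antimono[of N' "max N N'" m]
    by (auto simp: affine_on_tail_def)
  with assms show ?thesis by (simp add: affine_on_tail_def gplus_gaffine)
qed

lemma gpred_gaffine:
  "gaffine m k c d \<noteq> gzero \<Longrightarrow> gpred m (gaffine m k c d) = gaffine m k (c - (0, int m, 0)) d"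
  by (cases c; cases d) (auto simp: algebra_simps)

lemma affine_on_tail_gpred:
  assumes "0 < m" and f: "affine_on_tail m f k c N"
  shows "\<exists>k' c' N'. affine_on_tail m (\<lambda>d. gpred m (f d)) k' c' N'"
proof (cases "k = 0")
  case True
  obtain ca cz cr where c: "c = (ca, cz, cr)" by (cases c)
  define c' where "c' = gpred m (ca, cz, cr mod int m)"
  have "f d = (ca, cz, cr mod int m)" if "d \<in> tail m N" for d
    using f that True c by (cases d) (auto simp: affine_on_tail_def)
  moreover have "gaffine m 0 c' d = c'" for d
    by (cases d) (auto simp: c'_def)
  moreover have "0 \<le> fst c'"
    using f c by (auto simp: c'_def affine_on_tail_def)
  ultimately have "affine_on_tail m (\<lambda>d. gpred m (f d)) 0 c' N"
    by (simp add: affine_on_tail_def c'_def)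
  then show ?thesis by blast
next
  case False
  with f have k: "1 \<le> k" and ca: "0 \<le> fst c" by (auto simp: affine_on_tail_def)
  define N' where "N' = max N (nat \<bar>fst (snd c)\<bar> + 1)"
  have "gaffine m k c d \<noteq> gzero" if "d \<in> tail m N'" for d
  proof -
    obtain ca cz cr where c: "c = (ca, cz, cr)" by (cases c)
    from that consider n where "d = gnum m n" "N' \<le> n" | a z r where "d = (a, z, r)" "1 \<le> a"
      by (auto simp: tail_def nonstd_def)
    then show ?thesis
    proof cases
      case (1 n)
      have "nat \<bar>cz\<bar> < n" using 1(2) c by (simp add: N'_def)
      then have "\<bar>cz\<bar> < int n" by (simp add: nat_less_iff)
      also have "int n \<le> int m * int n" using assms(1) by (simp add: mult_le_cancel_right1)
      also have "\<dots> \<le> k * (int m * int n)" using k by (simp add: mult_le_cancel_right1 mult_less_0_iff)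
      finally show ?thesis using 1(1) c by (auto simp: gnum_def)
    next
      case (2 a z r)
      have "1 * 1 \<le> k * a" using k 2(2) by (intro mult_mono) auto
      then show ?thesis using ca c 2(1) by auto
    qed
  qed
  moreover have "tail m N' \<subseteq> tail m N" by (simp add: N'_def tail_antimono)
  ultimately have "affine_on_tail m (\<lambda>d. gpred m (f d)) k (c - (0, int m, 0)) N'"
    using f by (cases c) (auto simp: affine_on_tail_def gpred_gaffine simp del: gaffine.simps gpred.simps)
  then show ?thesis by blast
qed

lemma gfun_const_unless_arith:
  assumes "\<not> (f \<in> {FS, FP} \<and> length ds = 1)" and "\<not> (f = FPlus \<and> length ds = 2)"
  shows "gfun m f ds = gfun m f (replicate (length ds) gzero)"
  using assms by (cases f) (auto split: list.split simp: numeral_2_eq_2)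

lemma gterm_affine_on_tail:
  assumes "0 < m" and "range v \<subseteq> gdom m"
  shows "\<exists>k c N. affine_on_tail m (\<lambda>d. gterm m t (v(x := d))) k c N"
proof (induction t rule: trm_induct)
  case (Var y)
  show ?case
  proof (cases "y = x")
    case True
    then have "(\<lambda>d. gterm m (Var y) (v(x := d))) = (\<lambda>d. d)" by simp
    with affine_on_tail_id[OF assms(1)] show ?thesis by metis
  next
    case False
    then have "(\<lambda>d. gterm m (Var y) (v(x := d))) = (\<lambda>_. v y)" by simp
    moreover have "v y \<in> gdom m" using assms(2) by blast
    ultimately show ?thesis using affine_on_tail_const by metis
  qed
next
  case (Fn f ts)
  consider (S) t1 where "f = FS" "ts = [t1]" | (P) t1 where "f = FP" "ts = [t1]"
    | (Plus) t1 t2 where "f = FPlus" "ts = [t1, t2]"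
    | (other) "\<not> (f \<in> {FS, FP} \<and> length ts = 1)" "\<not> (f = FPlus \<and> length ts = 2)"
    by (auto simp: length_Suc_conv numeral_2_eq_2)
  then show ?case
  proof cases
    case (S t1)
    then have "t1 \<in> set ts" by simp
    then obtain k c N where "affine_on_tail m (\<lambda>d. gterm m t1 (v(x := d))) k c N"
      using Fn.IH by blast
    moreover have "(\<lambda>d. gterm m (Fn f ts) (v(x := d))) = (\<lambda>d. gsuc m (gterm m t1 (v(x := d))))"
      using S by simp
    ultimately show ?thesis using affine_on_tail_gsuc by (metis (no_types))
  next
    case (P t1)
    then have "t1 \<in> set ts" by simp
    then obtain k c N where "affine_on_tail m (\<lambda>d. gterm m t1 (v(x := d))) k c N"
      using Fn.IH by blast
    moreover have "(\<lambda>d. gterm m (Fn f ts) (v(x := d))) = (\<lambda>d. gpred m (gterm m t1 (v(x := d))))"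
      using P by simp
    ultimately show ?thesis using affine_on_tail_gpred[OF assms(1)] by (metis (no_types))
  next
    case (Plus t1 t2)
    then have "t1 \<in> set ts" "t2 \<in> set ts" by simp_all
    then obtain k1 c1 N1 k2 c2 N2
      where "affine_on_tail m (\<lambda>d. gterm m t1 (v(x := d))) k1 c1 N1"
        and "affine_on_tail m (\<lambda>d. gterm m t2 (v(x := d))) k2 c2 N2"
      using Fn.IH by meson
    moreover have "(\<lambda>d. gterm m (Fn f ts) (v(x := d)))
        = (\<lambda>d. gplus m (gterm m t1 (v(x := d))) (gterm m t2 (v(x := d))))"
      using Plus by simp
    ultimately show ?thesis using affine_on_tail_gplus by (metis (no_types))
  next
    case other
    let ?c = "gfun m f (replicate (length ts) gzero)"
    have "?c \<in> gdom m" using assms(1) by (intro gfun_in_gdom) auto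
    moreover have "(\<lambda>d. gterm m (Fn f ts) (v(x := d))) = (\<lambda>_. ?c)"
    proof
      fix d
      show "gterm m (Fn f ts) (v(x := d)) = ?c"
        using gfun_const_unless_arith[of f "map (\<lambda>t. gterm m t (v(x := d))) ts" m] other by simp
    qed
    ultimately show ?thesis using affine_on_tail_const by (metis (no_types))
  qed
qed

lemma gaffine_eq_if_eq_at_gsuc:
  assumes "0 < m" and "gaffine m k c d = gaffine m k' c' d"
    and "gaffine m k c (gsuc m d) = gaffine m k' c' (gsuc m d)"
  shows "gaffine m k c = gaffine m k' c'"
proof -
  obtain ca cz cr ca' cz' cr' a z r
    where c: "c = (ca, cz, cr)" "c' = (ca', cz', cr')" and d: "d = (a, z, r)"
    by (cases c; cases c'; cases d)
  from assms(2,3) have "k * z + cz = k' * z + cz'" "k * (z + int m) + cz = k' * (z + int m) + cz'"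
    by (simp_all add: c d)
  then have "k * int m = k' * int m" by (simp only: distrib_left)
  with assms(1) have k: "k = k'" by simp
  with assms(2) have "ca = ca'" "cz = cz'" "(k * r + cr) mod int m = (k * r + cr') mod int m"
    by (simp_all add: c d)
  then have "cr mod int m = cr' mod int m" by (simp add: mod_eq_dvd_iff)
  then have "(k * r' + cr) mod int m = (k * r' + cr') mod int m" for r'
    by (rule mod_add_cong[OF refl])
  with k \<open>ca = ca'\<close> \<open>cz = cz'\<close> show ?thesis by (auto simp: c)
qed

lemma glit_Pos_spreads_on_tail:
  assumes "0 < m" and "range v \<subseteq> gdom m"
  obtains N where "\<And>d d'. d \<in> tail m N \<Longrightarrow> d' \<in> tail m N \<Longrightarrow> glit m (v(x := d)) (Pos a) \<Longrightarrow>
    glit m (v(x := gsuc m d)) (Pos a) \<Longrightarrow> glit m (v(x := d')) (Pos a)"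
proof (cases a)
  case (AEq t u)
  obtain k c N1 k' c' N2
    where t: "affine_on_tail m (\<lambda>d. gterm m t (v(x := d))) k c N1"
      and u: "affine_on_tail m (\<lambda>d. gterm m u (v(x := d))) k' c' N2"
    using gterm_affine_on_tail[OF assms] by metis
  let ?N = "max N1 N2"
  have affine: "gterm m t (v(x := d)) = gaffine m k c d" "gterm m u (v(x := d)) = gaffine m k' c' d"
    if "d \<in> tail m ?N" for d
  proof -
    have "d \<in> tail m N1" "d \<in> tail m N2"
      using that tail_antimono[of N1 ?N m] tail_antimono[of N2 ?N m] by auto
    then show "gterm m t (v(x := d)) = gaffine m k c d" "gterm m u (v(x := d)) = gaffine m k' c' d"
      using t u unfolding affine_on_tail_def by blast+
  qed
  show ?thesis
  proof (rule that[of ?N])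
    fix d d' assume d: "d \<in> tail m ?N" "d' \<in> tail m ?N"
      and eq: "glit m (v(x := d)) (Pos a)" "glit m (v(x := gsuc m d)) (Pos a)"
    have "gaffine m k c d = gaffine m k' c' d"
      using eq(1) affine[OF d(1)] AEq by simp
    moreover have "gaffine m k c (gsuc m d) = gaffine m k' c' (gsuc m d)"
      using eq(2) affine[OF gsuc_in_tail[OF d(1)]] AEq by simp
    ultimately have "gaffine m k c = gaffine m k' c'"
      by (rule gaffine_eq_if_eq_at_gsuc[OF assms(1)])
    then show "glit m (v(x := d')) (Pos a)"
      using affine[OF d(2)] AEq by simp
  qed
qed (rule that[of 0], simp)

lemma glit_boundary:
  assumes "0 < m" and "range v \<subseteq> gdom m" and "glit m (v(x := gzero)) l"
    and "d \<in> gdom m" and "\<not> glit m (v(x := d)) l"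
  shows "\<exists>e\<in>gdom m. glit m (v(x := e)) l \<and> \<not> glit m (v(x := gsuc m e)) l"
proof (rule ccontr)
  assume "\<not> ?thesis"
  then have step: "glit m (v(x := gsuc m e)) l" if "e \<in> gdom m" "glit m (v(x := e)) l" for e
    using that by blast
  have num: "glit m (v(x := gnum m n)) l" for n
  proof (induction n)
    case 0
    show ?case using assms(3) by (simp only: gnum_0)
  next
    case (Suc n)
    show ?case using step[OF gnum_in_gdom Suc] by (simp only: gsuc_gnum)
  qed
  from assms(4,5) num have "d \<in> nonstd m" by (auto simp: gdom_def)
  then obtain a z r where d: "d = (a, z, r)" "1 \<le> a" "0 \<le> r" "r < int m"
    by (auto simp: nonstd_def)
  define e where "e = (a, z - int m, r)"
  have e: "e \<in> nonstd m" "gsuc m e = d" using d by (auto simp: e_def nonstd_def)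
  obtain b where l: "l = Pos b \<or> l = NegL b" by (cases l) auto
  obtain N where spread: "\<And>d d'. d \<in> tail m N \<Longrightarrow> d' \<in> tail m N \<Longrightarrow> glit m (v(x := d)) (Pos b) \<Longrightarrow>
    glit m (v(x := gsuc m d)) (Pos b) \<Longrightarrow> glit m (v(x := d')) (Pos b)"
    using glit_Pos_spreads_on_tail[OF assms(1,2)] by blast
  have tail: "d \<in> tail m N" "e \<in> tail m N" "gnum m N \<in> tail m N"
    using \<open>d \<in> nonstd m\<close> e(1) nonstd_subset_tail by (auto simp: gnum_in_tail)
  \<comment> \<open>For \<open>Pos b\<close> the atom holds at \<open>gnum m N\<close> and its successor, hence at \<open>d\<close>; for \<open>NegL b\<close>
    it holds at \<open>e\<close> and \<open>gsuc m e = d\<close>, hence at \<open>gnum m N\<close>.\<close>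
  from l show False
  proof
    assume "l = Pos b"
    then show False
      using spread[OF tail(3,1)] num[of N] num[of "Suc N"] assms(5) by simp
  next
    assume "l = NegL b"
    moreover have "\<not> glit m (v(x := e)) l"
      using step[of e] e assms(5) nonstd_subset_gdom by blast
    ultimately show False
      using spread[OF tail(2,3)] e(2) assms(5) num[of N] by simp
  qed
qed

section \<open>Soundness of \<open>Literal-AIND\<^sup>R\<^sub>2\<close> in \<open>G\<^sub>m\<close>\<close>

lemma glit_linst:
  assumes "x \<noteq> y" and "vars_lit l \<subseteq> {x, y}"
  shows "glit m v (linst l x y t (Fn c [])) = glit m ((\<lambda>_. gfun m c [])(x := gterm m t v)) l"
  unfolding linst_def glit_lsubst by (rule glit_cong) (use assms in auto)

lemma Literal_AIND_preserves_gtrue: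
  assumes "0 < m" and "(\<D>, \<B>) \<in> Literal_AIND" and "\<forall>C\<in>\<D>. gtrue m C"
  shows "clause_set \<B> \<and> (\<forall>C\<in>\<B>. gtrue m C)"
proof -
  from assms(2) obtain l x y c C where xy: "x \<noteq> y" and l: "vars_lit l \<subseteq> {x, y}" and "finite C"
    and premise: "insert (compl (linst l x y (Fn c []) (Fn c []))) C \<in> \<D>"
    and \<B>: "\<B> = {insert (compl (linst l x y zero (Fn c [])))
                  (insert (linst l x y (aind_sigma l x y (Fn c [])) (Fn c [])) C),
               insert (compl (linst l x y zero (Fn c [])))
                  (insert (compl (linst l x y (sc (aind_sigma l x y (Fn c []))) (Fn c []))) C)}"
    unfolding Literal_AIND_def by blast
  define P where "P d = glit m ((\<lambda>_. gfun m c [])(x := d)) l" for d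
  have inst: "glit m u (linst l x y t (Fn c [])) = P (gterm m t u)" for u t
    using glit_linst[OF xy l] by (simp add: P_def)
  define \<Phi> where "\<Phi> = FAll x (FImp (lit_form (linst l x y (Var x) (Fn c [])))
                                 (lit_form (linst l x y (sc (Var x)) (Fn c []))))"
  define \<sigma> where "\<sigma> = gfun m (FSk \<Phi>) []"
  have \<sigma>: "gterm m (aind_sigma l x y (Fn c [])) u = \<sigma>" for u
    by (simp add: aind_sigma_def \<Phi>_def \<sigma>_def)
  have witness: "gwitness m \<Phi> e \<longleftrightarrow> P e \<and> \<not> P (gsuc m e)" for e
    by (simp add: \<Phi>_def inst)
  have boundary: "P \<sigma> \<and> \<not> P (gsuc m \<sigma>)" if "P gzero" and "\<not> P (gfun m c [])"
  proof -
    have "gfun m c [] \<in> gdom m" using assms(1) by (simp add: gfun_in_gdom)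
    then have "\<exists>e\<in>gdom m. P e \<and> \<not> P (gsuc m e)"
      using glit_boundary[OF assms(1), of "\<lambda>_. gfun m c []" x l] that by (simp add: P_def)
    then show ?thesis
      using gfun_FSk_witness[of m \<Phi> "[]"] by (simp add: witness \<sigma>_def)
  qed
  have "gtrue m D" if "D \<in> \<B>" for D
    unfolding gtrue_def
  proof (intro allI impI)
    fix u :: "nat \<Rightarrow> G" assume u: "range u \<subseteq> gdom m"
    consider "P (gfun m c [])" | "\<not> P gzero" | "P gzero" "\<not> P (gfun m c [])" by blast
    then show "\<exists>l\<in>D. glit m u l"
    proof cases
      case 1
      with assms(3) premise u have "\<exists>l\<in>C. glit m u l" by (fastforce simp: gtrue_def inst)
      then show ?thesis using that \<B> by auto
    next
      case 2
      then show ?thesis using that \<B> by (auto simp: inst)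
    next
      case 3
      then show ?thesis using that \<B> boundary by (auto simp: inst \<sigma>)
    qed
  qed
  moreover have "clause_set \<B>" using \<open>finite C\<close> \<B> by (simp add: clause_set_def)
  ultimately show ?thesis by blast
qed

lemma not_refutes_if_gtrue:
  assumes "0 < m" and "is_sat_system S" and "sound S"
    and "clause_set C0" and "\<forall>C\<in>C0. gtrue m C"
  shows "\<not> refutes (S \<union> Literal_AIND) C0"
proof (rule not_refutes_if_model[OF assms(2,3) _ assms(4)])
  show "is_model (model_dom m) (model_fun m) (\<lambda>_ _. False) C0"
    using assms(1,5) by (simp add: is_model_iff_gtrue)
next
  fix \<D> \<B> assume "(\<D>, \<B>) \<in> Literal_AIND" and "is_model (model_dom m) (model_fun m) (\<lambda>_ _. False) \<D>"
  then show "clause_set \<B> \<and> is_model (model_dom m) (model_fun m) (\<lambda>_ _. False) \<B>"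
    using Literal_AIND_preserves_gtrue[OF assms(1)] by (simp add: is_model_iff_gtrue[OF assms(1)])
qed

theorem theorem6:
  fixes S :: sat_system and m n :: nat
  assumes "is_sat_system S" and "sound S" and "refut_complete S"
    and "0 < n" and "n < m"
  shows "\<not> refutes (S \<union> Literal_AIND) (Xcl m) \<and> \<not> refutes (S \<union> Literal_AIND) (Ycl m n)"
proof -
  from assms(4,5) have "0 < m" and "1 < m" by simp_all
  have "clause_set (Xcl m)" and "clause_set (Ycl m n)"
    by (simp_all only: Xcl_def Ycl_def clause_set_CNF)
  then show ?thesis
    using not_refutes_if_gtrue[OF \<open>0 < m\<close> assms(1,2)] Xcl_gtrue[OF \<open>1 < m\<close>] Ycl_gtrue[OF \<open>0 < m\<close>]
    by blast
qed

end
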